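(* Let $F$ be defined by the formula $F(x)=\beta_{i_1,1}+\sum_{k=2}^{\infty}\Big[\tilde\beta_{i_k,k}\prod_{j=1}^{k-1}\tilde p_{i_j,j}\Big]$ for $x=\Delta^{-\tilde Q}_{i_1i_2\dots i_n\dots}\in[0,1]$. Then $F$ is correctly defined at every point of $[0,1]$: for every nega-$\tilde Q$-representation of $x$ the series converges, and for every nega-$\tilde Q$-rational $x$ its two different nega-$\tilde Q$-representations give the same value of the series.
   Context: Let $(m_n)_{n\ge1}$ be a sequence of finite nonnegative integers and $\tilde Q=\|q_{i,n}\|$ ($n\in\mathbb N$, $i\in\{0,1,\dots,m_n\}$) a matrix with $q_{i,n}>0$, $\sum_{i=0}^{m_n}q_{i,n}=1$ for all $n$, and $\prod_{n=1}^\infty q_{i_n,n}=0$ for every sequence $(i_n)$ with $i_n\in\{0,\dots,m_n\}$. Put $a_{0,n}=0$, $a_{i,n}=\sum_{l=0}^{i-1}q_{l,n}$ for $i\ge1$, and for digit sequences $\Delta^{\tilde Q}_{j_1j_2\dots}=a_{j_1,1}+\sum_{n\ge2}a_{j_n,n}\prod_{l=1}^{n-1}q_{j_l,l}$. For odd $n$ set $\tilde q_{i,n}=q_{i,n}$, $\tilde a_{i,n}=a_{i,n}$; for even $n$ set $\tilde q_{i,n}=q_{m_n-i,n}$, $\tilde a_{i,n}=a_{m_n-i,n}$. The nega-$\tilde Q$-representation $x=\Delta^{-\tilde Q}_{i_1i_2\dots}$ ($i_n\in\{0,\dots,m_n\}$) means $x=\Delta^{\tilde Q}_{i_1[m_2-i_2]i_3[m_4-i_4]\dots}=a_{i_1,1}+\sum_{n\ge2}\tilde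 a_{i_n,n}\prod_{j=1}^{n-1}\tilde q_{i_j,j}$. Every $x\in[0,1]$ has such a representation; the numbers $\Delta^{-\tilde Q}_{i_1\dots i_{n-1}i_nm_{n+1}0m_{n+3}0m_{n+5}\dots}=\Delta^{-\tilde Q}_{i_1\dots i_{n-1}[i_n-1]0m_{n+2}0m_{n+4}\dots}$ ($i_n\neq0$) have exactly two representations and are called nega-$\tilde Q$-rational; the others have one and are called nega-$\tilde Q$-irrational. Let $P=\|p_{i,n}\|$ be a matrix of the same shape with $p_{i,n}\in(-1,1)$, $\sum_{i=0}^{m_n}p_{i,n}=1$ for all $n$, $\prod_{n=1}^\infty|p_{i_n,n}|=0$ for every digit sequence $(i_n)$, and $0<\sum_{i=0}^{c-1}p_{i,n}<1$ for all $n$ and $c\in\{1,\dots,m_n\}$. Put $\beta_{0,n}=0$, $\beta_{c,n}=\sum_{i=0}^{c-1}p_{i,n}$ for $c\ge1$; for odd $n$ let $\tilde p_{i,n}=p_{i,n}$, $\tilde\beta_{i,n}=\beta_{i,n}$, for even $n$ let $\tilde p_{i,n}=p_{m_n-i,n}$, $\tilde\beta_{i,n}=\beta_{m_n-i,n}$. *)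

theory Defs
  imports Complex_Main
begin

text \<open>Matrices are functions of (digit i, column n); columns are indexed from n = 1.\<close>

definition valid_digits :: "(nat \<Rightarrow> nat) \<Rightarrow> (nat \<Rightarrow> nat) \<Rightarrow> bool" where
  "valid_digits m d \<longleftrightarrow> (\<forall>n\<ge>1. d n \<le> m n)"

text \<open>Cumulative sums: a_{i,n} = sum_{l<i} q_{l,n} (so a_{0,n} = 0); likewise beta.\<close>
definition cum :: "(nat \<Rightarrow> nat \<Rightarrow> real) \<Rightarrow> nat \<Rightarrow> nat \<Rightarrow> real" where
  "cum q i n = (\<Sum>l<i. q l n)"

definition tld :: "(nat \<Rightarrow> nat) \<Rightarrow> (nat \<Rightarrow> nat \<Rightarrow> real) \<Rightarrow> nat \<Rightarrow> nat \<Rightarrow> real" where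
  "tld m f i n = (if odd n then f i n else f (m n - i) n)"

definition nega_term :: "(nat \<Rightarrow> nat) \<Rightarrow> (nat \<Rightarrow> nat \<Rightarrow> real) \<Rightarrow> (nat \<Rightarrow> nat) \<Rightarrow> nat \<Rightarrow> real" where
  "nega_term m q d n = tld m (cum q) (d n) n * (\<Prod>j\<in>{1..<n}. tld m q (d j) j)"

definition nega_val :: "(nat \<Rightarrow> nat) \<Rightarrow> (nat \<Rightarrow> nat \<Rightarrow> real) \<Rightarrow> (nat \<Rightarrow> nat) \<Rightarrow> real" where
  "nega_val m q d = (\<Sum>k. nega_term m q d (Suc k))"

end

theory Submission
  imports Defs
begin

text \<open>Reversing the digits at even positions turns the nega-\<open>Q\<close> representation into an
  ordinary \<open>Q\<close>-representation, and \<open>F\<close> into the ordinary \<open>P\<close>-series of the same digits.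
  A block of terms starting at position \<open>b + 1\<close> equals the prefix product up to \<open>b\<close> times a
  number in \<open>[0,1]\<close>, because all partial column sums of \<open>P\<close> lie in \<open>[0,1]\<close>; so the series
  is Cauchy once the prefix products tend to 0. If two digit sequences have the same
  \<open>Q\<close>-value and first differ at position \<open>b + 1\<close>, positivity of \<open>q\<close> squeezes the tails:
  the two digits there differ by one, the smaller sequence continues with maximal digits and
  the other with zeros. For such a pair the \<open>P\<close>-partial sums differ by exactly the
  \<open>P\<close>-prefix product of the first sequence, which tends to 0.\<close>

definition rep_prod :: "(nat \<Rightarrow> nat \<Rightarrow> real) \<Rightarrow> (nat \<Rightarrow> nat) \<Rightarrow> nat \<Rightarrow> real" where
  "rep_prod r e n = (\<Prod>j\<in>{1..<n}. r (e j) j)"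

definition rep_term :: "(nat \<Rightarrow> nat \<Rightarrow> real) \<Rightarrow> (nat \<Rightarrow> nat) \<Rightarrow> nat \<Rightarrow> real" where
  "rep_term r e n = cum r (e n) n * rep_prod r e n"

definition rep_val :: "(nat \<Rightarrow> nat \<Rightarrow> real) \<Rightarrow> (nat \<Rightarrow> nat) \<Rightarrow> real" where
  "rep_val r e = (\<Sum>k. rep_term r e (Suc k))"

definition rep_tail :: "(nat \<Rightarrow> nat \<Rightarrow> real) \<Rightarrow> (nat \<Rightarrow> nat) \<Rightarrow> nat \<Rightarrow> real" where
  "rep_tail r e b = rep_val r e - (\<Sum>k<b. rep_term r e (Suc k))"

lemma cum_0 [simp]: "cum r 0 n = 0"
  by (simp add: cum_def)

lemma cum_Suc: "cum r (Suc i) n = cum r i n + r i n"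
  by (simp add: cum_def)

lemma rep_prod_Suc: "1 \<le> n \<Longrightarrow> rep_prod r e (Suc n) = rep_prod r e n * r (e n) n"
  by (simp add: rep_prod_def prod.atLeastLessThan_Suc)

lemma rep_prod_Suc_eq_prod: "rep_prod r e (Suc N) = (\<Prod>n\<in>{1..N}. r (e n) n)"
  by (simp add: rep_prod_def atLeastLessThanSuc_atLeastAtMost)

lemma rep_prod_tendsto_0:
  assumes "(\<lambda>N. \<Prod>n\<in>{1..N}. \<bar>r (e n) n\<bar>) \<longlonglongrightarrow> 0"
  shows "rep_prod r e \<longlonglongrightarrow> 0"
proof -
  have "(\<lambda>N. \<bar>rep_prod r e (Suc N)\<bar>) \<longlonglongrightarrow> 0"
    using assms by (simp add: rep_prod_Suc_eq_prod abs_prod)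
  then show ?thesis
    by (simp add: tendsto_rabs_zero_iff filterlim_sequentially_Suc)
qed

lemma rep_prod_cong:
  "(\<And>j. 1 \<le> j \<Longrightarrow> j < n \<Longrightarrow> e j = e' j) \<Longrightarrow> rep_prod r e n = rep_prod r e' n"
  unfolding rep_prod_def by (intro prod.cong) auto

lemma rep_term_cong:
  "(\<And>j. 1 \<le> j \<Longrightarrow> j \<le> n \<Longrightarrow> e j = e' j) \<Longrightarrow> 1 \<le> n \<Longrightarrow> rep_term r e n = rep_term r e' n"
  unfolding rep_term_def using rep_prod_cong[of n e e' r] by simp

lemma rep_partial_sum_cong:
  "(\<And>j. 1 \<le> j \<Longrightarrow> j \<le> b \<Longrightarrow> e j = e' j) \<Longrightarrow>
     (\<Sum>k<b. rep_term r e (Suc k)) = (\<Sum>k<b. rep_term r e' (Suc k))"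
  by (intro sum.cong refl rep_term_cong) auto

lemma rep_tail_Suc: "rep_tail r e b = rep_term r e (Suc b) + rep_tail r e (Suc b)"
  by (simp add: rep_tail_def)

lemma rep_tail_eq_suminf:
  "summable (\<lambda>k. rep_term r e (Suc k)) \<Longrightarrow> rep_tail r e b = (\<Sum>k. rep_term r e (Suc (k + b)))"
  unfolding rep_tail_def rep_val_def by (subst suminf_split_initial_segment[of _ b]) auto

text \<open>A block of consecutive terms is the prefix product times the value of a finite
  representation, and such values stay in the unit interval: each new digit replaces \<open>t\<close>
  by a convex combination of the two cylinder endpoints.\<close>

lemma rep_block_sum_scaled:
  assumes digits: "valid_digits m e"
    and cum_unit: "\<And>n c. 1 \<le> n \<Longrightarrow> c \<le> Suc (m n) \<Longrightarrow> cum r c n \<in> {0..1}"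
  shows "\<exists>t\<in>{0..1}. (\<Sum>i\<in>{b..<b+k}. rep_term r e (Suc i)) = rep_prod r e (Suc b) * t"
proof (induction k arbitrary: b)
  case 0
  show ?case by (intro bexI[of _ 0]) auto
next
  case (Suc k)
  obtain t where t: "t \<in> {0..1}"
    and block: "(\<Sum>i\<in>{Suc b..<Suc b+k}. rep_term r e (Suc i)) = rep_prod r e (Suc (Suc b)) * t"
    using Suc.IH[of "Suc b"] by blast
  define c where "c = cum r (e (Suc b)) (Suc b)"
  define c' where "c' = cum r (Suc (e (Suc b))) (Suc b)"
  have "e (Suc b) \<le> m (Suc b)"
    using digits by (simp add: valid_digits_def)
  then have c: "c \<in> {0..1}" "c' \<in> {0..1}"
    using cum_unit[of "Suc b" "e (Suc b)"] cum_unit[of "Suc b" "Suc (e (Suc b))"]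
    by (simp_all add: c_def c'_def)
  have "(\<Sum>i\<in>{b..<b+Suc k}. rep_term r e (Suc i))
      = rep_term r e (Suc b) + (\<Sum>i\<in>{Suc b..<Suc b+k}. rep_term r e (Suc i))"
    by (simp add: sum.atLeast_Suc_lessThan)
  also have "\<dots> = rep_prod r e (Suc b) * ((1 - t) * c + t * c')"
    unfolding block by (simp add: rep_term_def rep_prod_Suc c_def c'_def cum_Suc algebra_simps)
  finally show ?case
    using c t by (intro bexI[of _ "(1 - t) * c + t * c'"]) (auto intro: convex_bound_le)
qed

lemma abs_rep_block_sum_le:
  assumes "valid_digits m e" "\<And>n c. 1 \<le> n \<Longrightarrow> c \<le> Suc (m n) \<Longrightarrow> cum r c n \<in> {0..1}"
  shows "\<bar>\<Sum>i\<in>{b..<b+k}. rep_term r e (Suc i)\<bar> \<le> \<bar>rep_prod r e (Suc b)\<bar>"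
proof -
  obtain t where "t \<in> {0..1}" "(\<Sum>i\<in>{b..<b+k}. rep_term r e (Suc i)) = rep_prod r e (Suc b) * t"
    using rep_block_sum_scaled[OF assms] by blast
  then show ?thesis by (simp add: abs_mult mult_left_le)
qed

lemma summable_rep_term_if_prod_tendsto_0:
  assumes digits: "valid_digits m e"
    and cum_unit: "\<And>n c. 1 \<le> n \<Longrightarrow> c \<le> Suc (m n) \<Longrightarrow> cum r c n \<in> {0..1}"
    and lim: "rep_prod r e \<longlonglongrightarrow> 0"
  shows "summable (\<lambda>k. rep_term r e (Suc k))"
  unfolding summable_Cauchy
proof (intro allI impI)
  fix \<epsilon> :: real
  assume "\<epsilon> > 0"
  then obtain M where M: "\<And>n. n \<ge> M \<Longrightarrow> \<bar>rep_prod r e n\<bar> < \<epsilon>"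
    using lim unfolding LIMSEQ_iff by auto
  have "norm (\<Sum>k\<in>{b..<n}. rep_term r e (Suc k)) < \<epsilon>" if "b \<ge> M" for b n
  proof (cases "n \<le> b")
    case False
    then obtain k where "n = b + k" using le_Suc_ex by fastforce
    then show ?thesis
      using abs_rep_block_sum_le[OF digits cum_unit, of b k] M[of "Suc b"] that by simp
  qed (use \<open>\<epsilon> > 0\<close> in simp)
  then show "\<exists>M. \<forall>b\<ge>M. \<forall>n. norm (\<Sum>k\<in>{b..<n}. rep_term r e (Suc k)) < \<epsilon>"
    by blast
qed

lemma cum_in_unit_of_partial_sums:
  assumes "(\<Sum>i\<le>k. r i n) = 1"
    and "\<And>c. 1 \<le> c \<Longrightarrow> c \<le> k \<Longrightarrow> 0 < cum r c n \<and> cum r c n < 1"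
    and "c \<le> Suc k"
  shows "cum r c n \<in> {0..1}"
proof -
  consider "c = 0" | "1 \<le> c" "c \<le> k" | "c = Suc k"
    using assms(3) by linarith
  then show ?thesis
    by cases (use assms in \<open>auto simp: cum_def lessThan_Suc_atMost less_imp_le\<close>)
qed

text \<open>The two digit sequences of a rational point.\<close>

definition adjacent_digits :: "(nat \<Rightarrow> nat) \<Rightarrow> nat \<Rightarrow> (nat \<Rightarrow> nat) \<Rightarrow> (nat \<Rightarrow> nat) \<Rightarrow> bool" where
  "adjacent_digits m b e e' \<longleftrightarrow>
     (\<forall>j. 1 \<le> j \<and> j \<le> b \<longrightarrow> e j = e' j) \<and> e' (Suc b) = Suc (e (Suc b)) \<and>
     (\<forall>n>Suc b. e n = m n) \<and> (\<forall>n>Suc b. e' n = 0)"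

text \<open>Telescoping: from position \<open>b + 1\<close> on, the partial sums of the two series differ by
  exactly the prefix product of the first sequence.\<close>

lemma rep_val_eq_of_adjacent:
  assumes r_sum: "\<And>n. 1 \<le> n \<Longrightarrow> (\<Sum>i\<le>m n. r i n) = 1"
    and summable: "summable (\<lambda>k. rep_term r e (Suc k))" "summable (\<lambda>k. rep_term r e' (Suc k))"
    and adjacent: "adjacent_digits m b e e'"
    and lim: "rep_prod r e \<longlonglongrightarrow> 0"
  shows "rep_val r e = rep_val r e'"
proof -
  have agree: "\<And>j. 1 \<le> j \<Longrightarrow> j \<le> b \<Longrightarrow> e j = e' j"
    and next_digit: "e' (Suc b) = Suc (e (Suc b))"
    and max_after: "\<forall>n>Suc b. e n = m n" and zero_after: "\<forall>n>Suc b. e' n = 0"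
    using adjacent by (simp_all add: adjacent_digits_def)
  define S where "S f N = (\<Sum>k<N. rep_term r f (Suc k))" for f N
  have diff: "S e N - S e' N = - rep_prod r e (Suc N)" if "Suc b \<le> N" for N
    using that
  proof (induction N rule: dec_induct)
    case base
    have "S e b = S e' b" "rep_prod r e (Suc b) = rep_prod r e' (Suc b)"
      unfolding S_def by (intro rep_partial_sum_cong rep_prod_cong; use agree in force)+
    then show ?case
      by (simp add: S_def rep_term_def next_digit cum_Suc rep_prod_Suc algebra_simps)
  next
    case (step N)
    have digit_max: "e (Suc N) = m (Suc N)"
      using max_after step.hyps by simp
    have "cum r (m (Suc N)) (Suc N) + r (m (Suc N)) (Suc N) = 1"
      using r_sum[of "Suc N"] by (simp add: cum_def lessThan_Suc_atMost[symmetric])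
    then have last_factor: "1 - cum r (e (Suc N)) (Suc N) = r (e (Suc N)) (Suc N)"
      by (simp add: digit_max)
    have "S e (Suc N) - S e' (Suc N) = - rep_prod r e (Suc N) * (1 - cum r (e (Suc N)) (Suc N))"
      using step zero_after by (simp add: S_def rep_term_def algebra_simps)
    also have "\<dots> = - rep_prod r e (Suc (Suc N))"
      by (simp add: last_factor rep_prod_Suc)
    finally show ?case .
  qed
  have "(\<lambda>N. S e N - S e' N) \<longlonglongrightarrow> rep_val r e - rep_val r e'"
    unfolding S_def rep_val_def by (intro tendsto_diff summable_LIMSEQ summable)
  moreover have "(\<lambda>N. S e N - S e' N) \<longlonglongrightarrow> 0"
  proof (rule Lim_transform_eventually)
    show "(\<lambda>N. - rep_prod r e (Suc N)) \<longlonglongrightarrow> 0"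
      using tendsto_minus[OF LIMSEQ_Suc[OF lim]] by simp
    show "\<forall>\<^sub>F N in sequentially. - rep_prod r e (Suc N) = S e N - S e' N"
      by (rule eventually_sequentiallyI[of "Suc b"]) (simp add: diff)
  qed
  ultimately have "rep_val r e - rep_val r e' = 0"
    by (rule LIMSEQ_unique)
  then show ?thesis
    by simp
qed

lemma first_difference:
  assumes "\<exists>n\<ge>1. e n \<noteq> e' n"
  obtains b where "\<And>j. 1 \<le> j \<Longrightarrow> j \<le> b \<Longrightarrow> e j = e' j" "e (Suc b) \<noteq> e' (Suc b)"
proof -
  define n where "n = (LEAST n. 1 \<le> n \<and> e n \<noteq> e' n)"
  have n: "1 \<le> n" "e n \<noteq> e' n"
    using LeastI_ex[OF assms] by (auto simp: n_def)
  have "e j = e' j" if "1 \<le> j" "j < n" for j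
    using not_less_Least[of j "\<lambda>n. 1 \<le> n \<and> e n \<noteq> e' n"] that by (auto simp: n_def)
  with n that[of "n - 1"] show ?thesis by simp
qed

locale Q_matrix =
  fixes m :: "nat \<Rightarrow> nat" and q :: "nat \<Rightarrow> nat \<Rightarrow> real"
  assumes q_pos: "\<And>n i. n \<ge> 1 \<Longrightarrow> i \<le> m n \<Longrightarrow> q i n > 0"
    and q_sum: "\<And>n. n \<ge> 1 \<Longrightarrow> (\<Sum>i\<le>m n. q i n) = 1"
begin

lemma cum_strict_mono:
  assumes "n \<ge> 1" "i < j" "j \<le> Suc (m n)"
  shows "cum q i n < cum q j n"
proof -
  have "cum q j n = cum q i n + (\<Sum>l\<in>{i..<j}. q l n)"
    using assms unfolding cum_def lessThan_atLeast0 by (simp add: sum.atLeastLessThan_concat)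
  moreover have "0 < (\<Sum>l\<in>{i..<j}. q l n)"
    using assms q_pos by (intro sum_pos) auto
  ultimately show ?thesis
    by simp
qed

lemma cum_mono: "n \<ge> 1 \<Longrightarrow> i \<le> j \<Longrightarrow> j \<le> Suc (m n) \<Longrightarrow> cum q i n \<le> cum q j n"
  using cum_strict_mono[of n i j] by (cases "i = j") auto

lemma cum_top: "n \<ge> 1 \<Longrightarrow> cum q (Suc (m n)) n = 1"
  using q_sum by (simp add: cum_def lessThan_Suc_atMost)

lemma cum_in_unit: "n \<ge> 1 \<Longrightarrow> c \<le> Suc (m n) \<Longrightarrow> cum q c n \<in> {0..1}"
  using cum_mono[of n 0 c] cum_mono[of n c "Suc (m n)"] cum_top[of n] by simp

lemma rep_prod_pos: "valid_digits m e \<Longrightarrow> 0 < rep_prod q e n"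
  unfolding rep_prod_def valid_digits_def using q_pos by (intro prod_pos) auto

lemma rep_term_nonneg:
  assumes "valid_digits m e" "n \<ge> 1"
  shows "0 \<le> rep_term q e n"
proof -
  have "e n \<le> m n"
    using assms by (simp add: valid_digits_def)
  then show ?thesis
    unfolding rep_term_def using assms rep_prod_pos[of e n] cum_in_unit[of n "e n"] by simp
qed

lemma rep_block_sum_le:
  assumes digits: "valid_digits m e"
  shows "(\<Sum>i\<in>{b..<b+k}. rep_term q e (Suc i)) \<le> rep_prod q e (Suc b)"
proof -
  have "\<bar>\<Sum>i\<in>{b..<b+k}. rep_term q e (Suc i)\<bar> \<le> \<bar>rep_prod q e (Suc b)\<bar>"
    by (rule abs_rep_block_sum_le[OF digits], rule cum_in_unit)
  then show ?thesis
    using rep_prod_pos[OF digits, of "Suc b"] by linarith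
qed

lemma summable_rep_term:
  assumes digits: "valid_digits m e"
  shows "summable (\<lambda>k. rep_term q e (Suc k))"
proof (rule summableI_nonneg_bounded)
  show "(\<Sum>k<N. rep_term q e (Suc k)) \<le> 1" for N
    using rep_block_sum_le[OF digits, of 0 N] by (simp add: lessThan_atLeast0 rep_prod_def)
qed (use digits rep_term_nonneg in simp)

lemma rep_tail_nonneg:
  assumes "valid_digits m e"
  shows "0 \<le> rep_tail q e b"
  using summable_ignore_initial_segment[OF summable_rep_term[OF assms], of b] rep_term_nonneg[OF assms]
  by (simp add: rep_tail_eq_suminf[OF summable_rep_term[OF assms]] suminf_nonneg)

lemma rep_tail_le:
  assumes digits: "valid_digits m e"
  shows "rep_tail q e b \<le> rep_prod q e (Suc b)"
proof -
  have "(\<Sum>k<N. rep_term q e (Suc (k + b))) \<le> rep_prod q e (Suc b)" for N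
  proof -
    have "(\<Sum>k<N. rep_term q e (Suc (k + b))) = (\<Sum>i\<in>{b..<b+N}. rep_term q e (Suc i))"
      using sum.shift_bounds_nat_ivl[of "\<lambda>i. rep_term q e (Suc i)" 0 b N]
      by (simp add: lessThan_atLeast0 add.commute)
    also have "\<dots> \<le> rep_prod q e (Suc b)"
      by (rule rep_block_sum_le[OF digits])
    finally show ?thesis .
  qed
  moreover have "summable (\<lambda>k. rep_term q e (Suc (k + b)))"
    using summable_ignore_initial_segment[OF summable_rep_term[OF digits], of b] by simp
  ultimately show ?thesis
    by (simp add: rep_tail_eq_suminf[OF summable_rep_term[OF digits]] suminf_le_const)
qed

lemma rep_tail_max_step:
  assumes digits: "valid_digits m e" and tail: "rep_tail q e b = rep_prod q e (Suc b)"
  shows "e (Suc b) = m (Suc b)" "rep_tail q e (Suc b) = rep_prod q e (Suc (Suc b))"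
proof -
  define n where "n = Suc b"
  define P where "P = rep_prod q e n"
  have n: "n \<ge> 1" and digit: "e n \<le> m n"
    using digits by (simp_all add: n_def valid_digits_def)
  have P: "0 < P"
    using rep_prod_pos[OF digits] by (simp add: P_def)
  have split: "P = cum q (e n) n * P + rep_tail q e n"
    using rep_tail_Suc[of q e b] tail by (simp add: rep_term_def P_def n_def)
  have "rep_tail q e n \<le> P * q (e n) n"
    using rep_tail_le[OF digits, of n] rep_prod_Suc[OF n, of q e] by (simp add: P_def)
  then have "P \<le> cum q (Suc (e n)) n * P"
    using split by (simp add: cum_Suc algebra_simps)
  then have top: "1 \<le> cum q (Suc (e n)) n"
    using P by simp
  have "\<not> e n < m n"
  proof
    assume "e n < m n"
    then have "cum q (Suc (e n)) n < 1"
      using cum_strict_mono[OF n, of "Suc (e n)" "Suc (m n)"] cum_top[OF n] by simp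
    with top show False
      by simp
  qed
  with digit show max: "e (Suc b) = m (Suc b)"
    by (simp add: n_def)
  have "1 - cum q (e n) n = q (e n) n"
    using cum_top[OF n] max by (simp add: n_def cum_Suc)
  moreover have "rep_tail q e n = P * (1 - cum q (e n) n)"
    using split by (simp add: algebra_simps)
  ultimately show "rep_tail q e (Suc b) = rep_prod q e (Suc (Suc b))"
    using rep_prod_Suc[OF n, of q e] by (simp add: P_def n_def)
qed

lemma rep_tail_zero_step:
  assumes digits: "valid_digits m e" and tail: "rep_tail q e b = 0"
  shows "e (Suc b) = 0" "rep_tail q e (Suc b) = 0"
proof -
  define n where "n = Suc b"
  have n: "n \<ge> 1" and digit: "e n \<le> m n"
    using digits by (simp_all add: n_def valid_digits_def)
  have "0 \<le> rep_term q e n" "0 \<le> rep_tail q e n"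
    using rep_term_nonneg[OF digits n] rep_tail_nonneg[OF digits] .
  moreover have "rep_term q e n + rep_tail q e n = 0"
    using rep_tail_Suc[of q e b] tail by (simp add: n_def)
  ultimately have "rep_term q e n = 0" and tail_zero: "rep_tail q e n = 0"
    by linarith+
  then have "cum q (e n) n = 0"
    using rep_prod_pos[OF digits, of n] by (simp add: rep_term_def)
  then show "e (Suc b) = 0"
    using cum_strict_mono[OF n, of 0 "e n"] digit by (auto simp: n_def)
  from tail_zero show "rep_tail q e (Suc b) = 0"
    by (simp add: n_def)
qed

lemma rep_tail_max:
  assumes digits: "valid_digits m e" and tail: "rep_tail q e b = rep_prod q e (Suc b)" and "b < n"
  shows "e n = m n"
proof -
  obtain k where k: "n = Suc k" "b \<le> k"
    using \<open>b < n\<close> by (cases n) auto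
  from k(2) have "rep_tail q e k = rep_prod q e (Suc k)"
    by (induction k rule: dec_induct) (use tail rep_tail_max_step(2)[OF digits] in auto)
  then show ?thesis
    using rep_tail_max_step(1)[OF digits] k(1) by simp
qed

lemma rep_tail_zero:
  assumes digits: "valid_digits m e" and tail: "rep_tail q e b = 0" and "b < n"
  shows "e n = 0"
proof -
  obtain k where k: "n = Suc k" "b \<le> k"
    using \<open>b < n\<close> by (cases n) auto
  from k(2) have "rep_tail q e k = 0"
    by (induction k rule: dec_induct) (use tail rep_tail_zero_step(2)[OF digits] in auto)
  then show ?thesis
    using rep_tail_zero_step(1)[OF digits] k(1) by simp
qed

lemma adjacent_digits_of_rep_val_eq:
  assumes digits: "valid_digits m e" "valid_digits m e'"
    and agree: "\<And>j. 1 \<le> j \<Longrightarrow> j \<le> b \<Longrightarrow> e j = e' j"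
    and less: "e (Suc b) < e' (Suc b)"
    and eq: "rep_val q e = rep_val q e'"
  shows "adjacent_digits m b e e'"
proof -
  define n where "n = Suc b"
  define P where "P = rep_prod q e n"
  have n: "n \<ge> 1" and digit': "e' n \<le> m n"
    using digits(2) by (simp_all add: n_def valid_digits_def)
  have P: "0 < P"
    using rep_prod_pos[OF digits(1)] by (simp add: P_def)
  have P': "rep_prod q e' n = P"
    unfolding P_def n_def by (rule rep_prod_cong) (use agree in force)
  have "rep_tail q e b = rep_tail q e' b"
    using rep_partial_sum_cong[of b e e' q, OF agree] by (simp add: rep_tail_def eq)
  then have tails: "cum q (e n) n * P + rep_tail q e n = cum q (e' n) n * P + rep_tail q e' n"
    using rep_tail_Suc[of q e b] rep_tail_Suc[of q e' b] P' by (simp add: rep_term_def P_def n_def)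
  have upper: "rep_tail q e n \<le> P * q (e n) n"
    using rep_tail_le[OF digits(1), of n] rep_prod_Suc[OF n, of q e] by (simp add: P_def)
  have lower: "0 \<le> rep_tail q e' n"
    by (rule rep_tail_nonneg[OF digits(2)])
  have "cum q (Suc (e n)) n \<le> cum q (e' n) n"
    using cum_mono[OF n, of "Suc (e n)" "e' n"] less digit' by (simp add: n_def)
  then have "P * cum q (Suc (e n)) n \<le> P * cum q (e' n) n"
    using P by simp
  with tails upper lower have cum_eq: "P * cum q (Suc (e n)) n = P * cum q (e' n) n"
    and tail: "rep_tail q e n = rep_prod q e (Suc n)" and tail': "rep_tail q e' n = 0"
    using rep_prod_Suc[OF n, of q e] by (simp_all add: P_def cum_Suc algebra_simps)
  have "\<not> Suc (e n) < e' n"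
    using cum_eq P cum_strict_mono[OF n, of "Suc (e n)" "e' n"] digit' by auto
  then have "e' (Suc b) = Suc (e (Suc b))"
    using less by (simp add: n_def)
  then show ?thesis
    unfolding adjacent_digits_def
    using agree rep_tail_max[OF digits(1) tail] rep_tail_zero[OF digits(2) tail'] by (simp add: n_def)
qed

lemma rep_val_transfer:
  assumes p_sum: "\<And>n. 1 \<le> n \<Longrightarrow> (\<Sum>i\<le>m n. p i n) = 1"
    and p_unit: "\<And>n c. 1 \<le> n \<Longrightarrow> c \<le> Suc (m n) \<Longrightarrow> cum p c n \<in> {0..1}"
    and p_lim: "\<And>e. valid_digits m e \<Longrightarrow> rep_prod p e \<longlonglongrightarrow> 0"
    and digits: "valid_digits m e" "valid_digits m e'"
    and eq: "rep_val q e = rep_val q e'"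
  shows "rep_val p e = rep_val p e'"
proof -
  have summable: "summable (\<lambda>k. rep_term p e (Suc k))" if "valid_digits m e" for e
    using summable_rep_term_if_prod_tendsto_0[OF that p_unit p_lim[OF that]] .
  have adjacent: "rep_val p e = rep_val p e'"
    if digits: "valid_digits m e" "valid_digits m e'" and eq: "rep_val q e = rep_val q e'"
      and agree: "\<And>j. 1 \<le> j \<Longrightarrow> j \<le> b \<Longrightarrow> e j = e' j"
      and less: "e (Suc b) < e' (Suc b)" for e e' b
    by (rule rep_val_eq_of_adjacent[OF p_sum summable[OF digits(1)] summable[OF digits(2)]
          adjacent_digits_of_rep_val_eq[OF digits agree less eq] p_lim[OF digits(1)]])
  show ?thesis
  proof (cases "\<forall>n\<ge>1. e n = e' n")
    case True
    have "rep_term p e (Suc k) = rep_term p e' (Suc k)" for k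
      by (rule rep_term_cong) (use True in auto)
    then show ?thesis
      by (simp add: rep_val_def)
  next
    case False
    then obtain b where agree: "\<And>j. 1 \<le> j \<Longrightarrow> j \<le> b \<Longrightarrow> e j = e' j"
      and differ: "e (Suc b) \<noteq> e' (Suc b)"
      using first_difference by blast
    from differ consider "e (Suc b) < e' (Suc b)" | "e' (Suc b) < e (Suc b)"
      by linarith
    then show ?thesis
    proof cases
      case 1
      then show ?thesis
        using adjacent[OF digits eq agree] by blast
    next
      case 2
      have "\<And>j. 1 \<le> j \<Longrightarrow> j \<le> b \<Longrightarrow> e' j = e j"
        using agree by simp
      from adjacent[OF digits(2,1) eq[symmetric] this 2] show ?thesis
        by simp
    qed
  qed
qed

end

definition nega_digits :: "(nat \<Rightarrow> nat) \<Rightarrow> (nat \<Rightarrow> nat) \<Rightarrow> nat \<Rightarrow> nat" where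
  "nega_digits m d n = (if odd n then d n else m n - d n)"

lemma valid_nega_digits: "valid_digits m d \<Longrightarrow> valid_digits m (nega_digits m d)"
  by (simp add: valid_digits_def nega_digits_def)

lemma tld_eq_nega_digits: "tld m f (d n) n = f (nega_digits m d n) n"
  by (simp add: tld_def nega_digits_def)

lemma nega_term_eq_rep_term: "nega_term m r d n = rep_term r (nega_digits m d) n"
  unfolding nega_term_def rep_term_def rep_prod_def tld_eq_nega_digits ..

lemma nega_val_eq_rep_val: "nega_val m r d = rep_val r (nega_digits m d)"
  by (simp add: nega_val_def rep_val_def nega_term_eq_rep_term)

theorem mainTheorem1:
  fixes m :: "nat \<Rightarrow> nat" and q p :: "nat \<Rightarrow> nat \<Rightarrow> real"
  assumes q_pos: "\<And>n i. n \<ge> 1 \<Longrightarrow> i \<le> m n \<Longrightarrow> q i n > 0"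
    and q_sum: "\<And>n. n \<ge> 1 \<Longrightarrow> (\<Sum>i\<le>m n. q i n) = 1"
    and q_prod: "\<And>d. valid_digits m d \<Longrightarrow> (\<lambda>N. \<Prod>n\<in>{1..N}. q (d n) n) \<longlonglongrightarrow> 0"
    and p_bound: "\<And>n i. n \<ge> 1 \<Longrightarrow> i \<le> m n \<Longrightarrow> -1 < p i n \<and> p i n < 1"
    and p_sum: "\<And>n. n \<ge> 1 \<Longrightarrow> (\<Sum>i\<le>m n. p i n) = 1"
    and p_prod: "\<And>d. valid_digits m d \<Longrightarrow> (\<lambda>N. \<Prod>n\<in>{1..N}. \<bar>p (d n) n\<bar>) \<longlonglongrightarrow> 0"
    and p_partial: "\<And>n c. n \<ge> 1 \<Longrightarrow> 1 \<le> c \<Longrightarrow> c \<le> m n \<Longrightarrow>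
                      0 < (\<Sum>i<c. p i n) \<and> (\<Sum>i<c. p i n) < 1"
  shows "(\<forall>d. valid_digits m d \<longrightarrow> summable (\<lambda>k. nega_term m p d (Suc k)))
       \<and> (\<forall>d d'. valid_digits m d \<longrightarrow> valid_digits m d' \<longrightarrow>
            nega_val m q d = nega_val m q d' \<longrightarrow>
            (\<Sum>k. nega_term m p d (Suc k)) = (\<Sum>k. nega_term m p d' (Suc k)))"
proof -
  interpret Q_matrix m q
    using q_pos q_sum by unfold_locales
  have p_unit: "cum p c n \<in> {0..1}" if "1 \<le> n" "c \<le> Suc (m n)" for n c
    by (rule cum_in_unit_of_partial_sums[where r = p and n = n, OF p_sum[OF that(1)]])
      (use p_partial[OF that(1)] that(2) in \<open>simp_all add: cum_def\<close>)
  have p_lim: "rep_prod p e \<longlonglongrightarrow> 0" if "valid_digits m e" for e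
    using p_prod[OF that] by (rule rep_prod_tendsto_0)
  show ?thesis
    unfolding nega_val_eq_rep_val nega_term_eq_rep_term rep_val_def[symmetric]
  proof (intro conjI allI impI)
    fix d
    assume "valid_digits m d"
    then have digits: "valid_digits m (nega_digits m d)"
      by (rule valid_nega_digits)
    show "summable (\<lambda>k. rep_term p (nega_digits m d) (Suc k))"
      by (rule summable_rep_term_if_prod_tendsto_0[OF digits p_unit p_lim[OF digits]])
  next
    fix d d'
    assume "valid_digits m d" "valid_digits m d'"
      and "rep_val q (nega_digits m d) = rep_val q (nega_digits m d')"
    then show "rep_val p (nega_digits m d) = rep_val p (nega_digits m d')"
      by (intro rep_val_transfer[OF p_sum p_unit p_lim] valid_nega_digits)
  qed
qed

end
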